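(* Let $X_T>0$ be integrable with density $p$, independent of a standard gamma bridge $\{\gamma_{tT}\}$ with parameter $m>0$, $\xi_t=X_T\gamma_{tT}$, and let $P_{0t},P_{tT}>0$ be deterministic discount factors. Fix $0<t<T$ and $K>0$, and let $$S(t,y)=P_{tT}\frac{\int_y^\infty p(x)x^{2-mT}(x-y)^{m(T-t)-1}dx}{\int_y^\infty p(x)x^{1-mT}(x-y)^{m(T-t)-1}dx},$$ so that $S_t=S(t,\xi_t)$ (with $S_t=P_{tT}\mathbb E[X_T\mid\sigma(\xi_u,u\le t)]$). Suppose there is $y^*\ge0$ such that $S(t,y)\ge K$ for every $y>y^*$ and $S(t,y)\le K$ for every $0<y<y^*$ (wherever the denominator is positive). Then $$C_{0t}:=P_{0t}\,\mathbb E[(S_t-K)^+]=P_{0t}\int_{y^*}^\infty p(x)\,(xP_{tT}-K)\,\mathcal B_{mt,m(T-t)}(y^*/x)\,dx,$$ where for $a,b>0$ and $0\le u\le1$, $\mathcal B_{a,b}(u)=\frac{\int_u^1 z^{a-1}(1-z)^{b-1}dz}{\int_0^1 z^{a-1}(1-z)^{b-1}dz}$ is the complementary beta distribution function.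
   Context: A standard gamma process with growth rate $m>0$ on a probability space $(\Omega,\mathcal F,\mathbb Q)$ is a process $\{\gamma_t\}_{t\ge0}$ with $\gamma_0=0$ and independent increments, such that for $0\le s<t$ the increment $\gamma_t-\gamma_s$ has the gamma density $\mathbf 1_{\{x>0\}}x^{m(t-s)-1}e^{-x}/\Gamma[m(t-s)]$. A standard gamma bridge over $[0,T]$ with parameter $m$ is any process with the law of $\{\gamma_t/\gamma_T\}_{0\le t\le T}$ for such a gamma process. *)

theory Defs
  imports "HOL-Probability.Probability"
begin

definition gamma_density :: "real \<Rightarrow> real \<Rightarrow> real" where
  "gamma_density a x = (if x > 0 then x powr (a - 1) * exp (- x) / Gamma a else 0)"

definition gamma_process :: "'a measure \<Rightarrow> real \<Rightarrow> (real \<Rightarrow> 'a \<Rightarrow> real) \<Rightarrow> bool" where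
  "gamma_process M m g \<longleftrightarrow>
     prob_space M \<and>
     (\<forall>t\<ge>0. g t \<in> borel_measurable M) \<and>
     (AE \<omega> in M. g 0 \<omega> = 0) \<and>
     (\<forall>s t. 0 \<le> s \<and> s < t \<longrightarrow>
        distributed M lborel (\<lambda>\<omega>. g t \<omega> - g s \<omega>)
          (\<lambda>x. ennreal (gamma_density (m * (t - s)) x))) \<and>
     (\<forall>ts :: real list. sorted ts \<and> distinct ts \<and> (\<forall>x\<in>set ts. 0 \<le> x) \<longrightarrow>
        prob_space.indep_vars M (\<lambda>_. borel)
          (\<lambda>i \<omega>. g (ts ! Suc i) \<omega> - g (ts ! i) \<omega>) {..<length ts - 1})"

definition path_on :: "real \<Rightarrow> (real \<Rightarrow> 'a \<Rightarrow> real) \<Rightarrow> 'a \<Rightarrow> (real \<Rightarrow> real)" where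
  "path_on T b \<omega> = (\<lambda>t\<in>{0..T}. b t \<omega>)"

text \<open>Standard gamma bridge over [0,T] with parameter m: any process on M whose law
  (on the product sigma-algebra of paths over [0,T]) equals the law of
  gamma_t / gamma_T for a standard gamma process gamma with growth rate m
  (realised on some probability space, here on the canonical path type).\<close>
definition gamma_bridge :: "'a measure \<Rightarrow> real \<Rightarrow> real \<Rightarrow> (real \<Rightarrow> 'a \<Rightarrow> real) \<Rightarrow> bool" where
  "gamma_bridge M m T b \<longleftrightarrow>
     (\<forall>t\<in>{0..T}. b t \<in> borel_measurable M) \<and>
     (\<exists>(N :: (real \<Rightarrow> real) measure) g. gamma_process N m g \<and>
        distr M (Pi\<^sub>M {0..T} (\<lambda>_. borel)) (path_on T b) =
        distr N (Pi\<^sub>M {0..T} (\<lambda>_. borel)) (path_on T (\<lambda>t \<omega>. g t \<omega> / g T \<omega>)))"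

definition S_num :: "real \<Rightarrow> real \<Rightarrow> (real \<Rightarrow> real) \<Rightarrow> real \<Rightarrow> real \<Rightarrow> real" where
  "S_num m T p t y = set_lebesgue_integral lborel {y<..}
     (\<lambda>x. p x * x powr (2 - m * T) * (x - y) powr (m * (T - t) - 1))"

definition S_den :: "real \<Rightarrow> real \<Rightarrow> (real \<Rightarrow> real) \<Rightarrow> real \<Rightarrow> real \<Rightarrow> real" where
  "S_den m T p t y = set_lebesgue_integral lborel {y<..}
     (\<lambda>x. p x * x powr (1 - m * T) * (x - y) powr (m * (T - t) - 1))"

definition S_fun :: "real \<Rightarrow> real \<Rightarrow> real \<Rightarrow> (real \<Rightarrow> real) \<Rightarrow> real \<Rightarrow> real \<Rightarrow> real" where
  "S_fun m T PtT p t y = PtT * S_num m T p t y / S_den m T p t y"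

definition beta_compl :: "real \<Rightarrow> real \<Rightarrow> real \<Rightarrow> real" where
  "beta_compl a b u =
     set_lebesgue_integral lborel {u..1} (\<lambda>z. z powr (a - 1) * (1 - z) powr (b - 1)) /
     set_lebesgue_integral lborel {0..1} (\<lambda>z. z powr (a - 1) * (1 - z) powr (b - 1))"

text \<open>Independence of two random variables with possibly different value types
  (the right-hand side of the library lemma prob_space.indep_var_eq, which the
  library's indep_var can only state for equal value types).\<close>
definition indep_rv :: "'a measure \<Rightarrow> 'b measure \<Rightarrow> ('a \<Rightarrow> 'b) \<Rightarrow> 'c measure \<Rightarrow> ('a \<Rightarrow> 'c) \<Rightarrow> bool" where
  "indep_rv M S X T Y \<longleftrightarrow>
     X \<in> measurable M S \<and> Y \<in> measurable M T \<and>
     prob_space.indep_set M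
       (sigma_sets (space M) { X -` A \<inter> space M | A. A \<in> sets S})
       (sigma_sets (space M) { Y -` A \<inter> space M | A. A \<in> sets T})"

end

theory Submission
  imports Defs
begin

text \<open>
  The proof rests on three facts.
  (1) gamma_tT has the beta law with parameters m t and m (T - t): it equals G1 / (G1 + G2)
      for the independent gamma increments of the underlying gamma process over [0, t] and
      [t, T].  Hence (X_T, gamma_tT) has the product density p(x) beta(u).
  (2) For X with density q on (0, \<infinity>) and U beta(a, c) independent of X, the substitution
      y = x u gives E[w(X) G(X U)] = \<integral> G(y) product_weight(y) product_kernel(q w)(y) dy,
      where product_weight is a power of y and product_kernel r is an integral transform of r.
      For w = 1 and w x = x the kernels are the denominator and numerator of S(t, y), so
      S(t, xi_t) is P_tT times the conditional mean of X_T given xi_t.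
  (3) Splitting the payoff pointwise along the exercise boundary y* gives
      E[(S_t - K)^+] + K P(xi_t > y* ) = P_tT E[X_T; xi_t > y*], and by the same mixture
      argument both tail terms are integrals of p against the complementary beta function.
\<close>

section \<open>The beta density\<close>

definition beta_density :: "real \<Rightarrow> real \<Rightarrow> real \<Rightarrow> real" where
  "beta_density a c u = indicator {0<..<1} u * u powr (a - 1) * (1 - u) powr (c - 1) / Beta a c"

lemma Beta_pos: "a > 0 \<Longrightarrow> c > 0 \<Longrightarrow> Beta a c > (0::real)"
  by (simp add: Beta_def)

lemma beta_density_nonneg: "a > 0 \<Longrightarrow> c > 0 \<Longrightarrow> beta_density a c u \<ge> 0"
  using Beta_pos[of a c] by (simp add: beta_density_def)

lemma beta_density_measurable [measurable]: "beta_density a c \<in> borel_measurable borel"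
  unfolding beta_density_def by measurable

lemma gamma_density_measurable [measurable]: "gamma_density a \<in> borel_measurable borel"
  unfolding gamma_density_def by measurable

lemma gamma_density_nonneg: "a > 0 \<Longrightarrow> gamma_density a x \<ge> 0"
  by (simp add: gamma_density_def)

lemma nn_integral_lborel_shift:
  fixes f :: "real \<Rightarrow> ennreal" assumes [measurable]: "f \<in> borel_measurable borel"
  shows "(\<integral>\<^sup>+y. f y \<partial>lborel) = (\<integral>\<^sup>+u. f (u - x) \<partial>lborel)"
  using nn_integral_real_affine[of f 1 "-x"] by simp

lemma nn_integral_lborel_scale:
  fixes f :: "real \<Rightarrow> ennreal" assumes [measurable]: "f \<in> borel_measurable borel" and c: "c > 0"
  shows "(\<integral>\<^sup>+y. f y \<partial>lborel) = ennreal c * (\<integral>\<^sup>+z. f (c * z) \<partial>lborel)"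
  using nn_integral_real_affine[of f c 0] c by simp

text \<open>The inner integral of the beta-gamma computation: after the substitution x = u z,
  the integral over x < u factors into a power of u and a beta-type integral in z.\<close>
lemma gamma_convolution_slice:
  fixes h :: "real \<Rightarrow> ennreal"
  assumes h [measurable]: "h \<in> borel_measurable borel" and u: "u > 0"
  shows "(\<integral>\<^sup>+x. ennreal (indicator {0<..<u} x * x powr (a - 1) * (u - x) powr (c - 1)) * h (x / u) \<partial>lborel)
       = ennreal (u powr (a + c - 1)) *
         (\<integral>\<^sup>+z. ennreal (indicator {0<..<1} z * z powr (a - 1) * (1 - z) powr (c - 1)) * h z \<partial>lborel)"
proof -
  have powers: "(u * z) powr (a - 1) * (u - u * z) powr (c - 1) * u
      = u powr (a + c - 1) * (z powr (a - 1) * (1 - z) powr (c - 1))" if "0 < z" "z < 1" for z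
  proof -
    have "u - u * z = u * (1 - z)" by (simp add: algebra_simps)
    then have "(u * z) powr (a - 1) * (u - u * z) powr (c - 1) * u
        = (u powr (a - 1) * u powr (c - 1) * u powr 1) * (z powr (a - 1) * (1 - z) powr (c - 1))"
      using u that by (simp add: powr_mult)
    also have "u powr (a - 1) * u powr (c - 1) * u powr 1 = u powr ((a - 1) + (c - 1) + 1)"
      by (simp only: powr_add)
    also have "(a - 1) + (c - 1) + 1 = a + c - 1"
      by simp
    finally show ?thesis .
  qed
  have "(\<integral>\<^sup>+x. ennreal (indicator {0<..<u} x * x powr (a - 1) * (u - x) powr (c - 1)) * h (x / u) \<partial>lborel)
      = ennreal u * (\<integral>\<^sup>+z. ennreal (indicator {0<..<u} (u * z) * (u * z) powr (a - 1) * (u - u * z) powr (c - 1)) * h (u * z / u) \<partial>lborel)"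
    by (rule nn_integral_lborel_scale) (use u in auto)
  also have "\<dots> = (\<integral>\<^sup>+z. ennreal (u powr (a + c - 1)) *
        (ennreal (indicator {0<..<1} z * z powr (a - 1) * (1 - z) powr (c - 1)) * h z) \<partial>lborel)"
  proof (subst nn_integral_cmult[symmetric], simp, intro nn_integral_cong)
    fix z :: real
    have "0 < u * z \<and> u * z < u \<longleftrightarrow> 0 < z \<and> z < 1"
      using u by (auto simp: zero_less_mult_iff)
    moreover have "ennreal u * (ennreal ((u * z) powr (a - 1) * (u - u * z) powr (c - 1)) * h z)
        = ennreal (u powr (a + c - 1)) * (ennreal (z powr (a - 1) * (1 - z) powr (c - 1)) * h z)"
      if "0 < z" "z < 1"
    proof -
      have "ennreal u * ennreal ((u * z) powr (a - 1) * (u - u * z) powr (c - 1))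
          = ennreal (u powr (a + c - 1)) * ennreal (z powr (a - 1) * (1 - z) powr (c - 1))"
        using u powers[OF that] by (simp add: ennreal_mult'[symmetric] mult.commute)
      then show ?thesis by (simp only: mult.assoc[symmetric])
    qed
    ultimately show "ennreal u * (ennreal (indicator {0<..<u} (u * z) * (u * z) powr (a - 1) * (u - u * z) powr (c - 1)) * h (u * z / u))
        = ennreal (u powr (a + c - 1)) * (ennreal (indicator {0<..<1} z * z powr (a - 1) * (1 - z) powr (c - 1)) * h z)"
      using u by (auto simp: indicator_def)
  qed
  also have "\<dots> = ennreal (u powr (a + c - 1)) *
        (\<integral>\<^sup>+z. ennreal (indicator {0<..<1} z * z powr (a - 1) * (1 - z) powr (c - 1)) * h z \<partial>lborel)"
    by (rule nn_integral_cmult) auto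
  finally show ?thesis .
qed

text \<open>If G1 and G2 are independent with gamma laws of shapes a and c, then G1 / (G1 + G2)
  has the beta law with parameters a and c; here in analytic form, for the product density.\<close>
lemma gamma_ratio_beta:
  fixes a c :: real and h :: "real \<Rightarrow> ennreal"
  assumes a: "a > 0" and c: "c > 0" and h [measurable]: "h \<in> borel_measurable borel"
  shows "(\<integral>\<^sup>+x. \<integral>\<^sup>+y. ennreal (gamma_density a x * gamma_density c y) * h (x / (x + y)) \<partial>lborel \<partial>lborel)
       = (\<integral>\<^sup>+z. ennreal (beta_density a c z) * h z \<partial>lborel)"
proof -
  define k where "k = 1 / (Gamma a * Gamma c)"
  have k: "k > 0" using a c by (simp add: k_def)
  define C where "C = (\<integral>\<^sup>+z. ennreal (indicator {0<..<1} z * z powr (a - 1) * (1 - z) powr (c - 1)) * h z \<partial>lborel)"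
  define F where "F = (\<lambda>x u. ennreal (indicator {0<..<u} x * x powr (a - 1) * (u - x) powr (c - 1)) * h (x / u))"
  have F_measurable [measurable]: "(\<lambda>(x, u). ennreal (k * exp (- u)) * F x u) \<in> borel_measurable (lborel \<Otimes>\<^sub>M lborel)"
    unfolding F_def indicator_def greaterThanLessThan_iff by measurable
  have density_shift: "(\<integral>\<^sup>+y. ennreal (gamma_density a x * gamma_density c y) * h (x / (x + y)) \<partial>lborel)
      = (\<integral>\<^sup>+u. ennreal (k * exp (- u)) * F x u \<partial>lborel)" for x
  proof -
    have "(\<integral>\<^sup>+y. ennreal (gamma_density a x * gamma_density c y) * h (x / (x + y)) \<partial>lborel)
      = (\<integral>\<^sup>+u. ennreal (gamma_density a x * gamma_density c (u - x)) * h (x / (x + (u - x))) \<partial>lborel)"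
      by (rule nn_integral_lborel_shift) auto
    also have "\<dots> = (\<integral>\<^sup>+u. ennreal (k * exp (- u)) * F x u \<partial>lborel)"
      using a c by (intro nn_integral_cong)
        (auto simp: F_def gamma_density_def k_def indicator_def exp_diff exp_minus
          ennreal_mult'[symmetric] field_simps)
    finally show ?thesis .
  qed
  have slice: "(\<integral>\<^sup>+x. ennreal (k * exp (- u)) * F x u \<partial>lborel)
      = ennreal k * ennreal (indicator {0..} u * u powr (a + c - 1) / exp u) * C" for u
  proof (cases "u > 0")
    case False
    then have "F x u = 0" for x by (auto simp: F_def indicator_def)
    with False show ?thesis by (auto simp: indicator_def)
  next
    case True
    have "(\<integral>\<^sup>+x. ennreal (k * exp (- u)) * F x u \<partial>lborel) = ennreal (k * exp (- u)) * (\<integral>\<^sup>+x. F x u \<partial>lborel)"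
      by (rule nn_integral_cmult) (auto simp: F_def)
    also have "(\<integral>\<^sup>+x. F x u \<partial>lborel) = ennreal (u powr (a + c - 1)) * C"
      unfolding F_def C_def by (rule gamma_convolution_slice[OF h True])
    finally show ?thesis
      using True k by (simp add: ennreal_mult'[symmetric] exp_minus field_simps mult.assoc)
  qed
  have "(\<integral>\<^sup>+x. \<integral>\<^sup>+y. ennreal (gamma_density a x * gamma_density c y) * h (x / (x + y)) \<partial>lborel \<partial>lborel)
      = (\<integral>\<^sup>+x. \<integral>\<^sup>+u. ennreal (k * exp (- u)) * F x u \<partial>lborel \<partial>lborel)"
    by (simp add: density_shift)
  also have "\<dots> = (\<integral>\<^sup>+u. \<integral>\<^sup>+x. ennreal (k * exp (- u)) * F x u \<partial>lborel \<partial>lborel)"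
    using lborel_pair.Fubini'[OF F_measurable] by simp
  also have "\<dots> = ennreal k * (\<integral>\<^sup>+u. ennreal (indicator {0..} u * u powr (a + c - 1) / exp u) \<partial>lborel) * C"
    unfolding slice by (simp add: nn_integral_cmult nn_integral_multc)
  also have "\<dots> = ennreal (k * Gamma (a + c)) * C"
    using a c k by (simp add: Gamma_conv_nn_integral_real ennreal_mult)
  also have "\<dots> = (\<integral>\<^sup>+z. ennreal (beta_density a c z) * h z \<partial>lborel)"
  proof -
    have "k * Gamma (a + c) = 1 / Beta a c" by (simp add: k_def Beta_def)
    then show ?thesis
      unfolding C_def using Beta_pos[OF a c]
      by (subst nn_integral_cmult[symmetric])
         (auto intro!: nn_integral_cong simp: beta_density_def ennreal_mult'[symmetric] mult.assoc[symmetric] indicator_def)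
  qed
  finally show ?thesis .
qed

section \<open>The one-dimensional marginal of a gamma bridge\<close>

lemma (in prob_space) indep_vars_pair:
  assumes indep: "indep_vars (\<lambda>_. borel) Z I" and ij: "i \<in> I" "j \<in> I" "i \<noteq> j"
  shows "indep_var borel (Z i) borel (Z j)"
proof -
  have "indep_var borel ((\<lambda>f. f i) \<circ> (\<lambda>\<omega>. restrict (\<lambda>k. Z k \<omega>) {i}))
      borel ((\<lambda>f. f j) \<circ> (\<lambda>\<omega>. restrict (\<lambda>k. Z k \<omega>) {j}))"
    using ij by (intro indep_var_compose[OF indep_var_restrict[OF indep]]) auto
  then show ?thesis
    by (simp add: o_def)
qed

text \<open>The ratio gamma_t / gamma_T of a gamma process has the beta law with parameters
  m t and m (T - t): it is G1 / (G1 + G2) for the independent gamma increments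
  G1 over [0, t] and G2 over [t, T].\<close>
lemma gamma_process_ratio_distributed:
  fixes N :: "'b measure" and g :: "real \<Rightarrow> 'b \<Rightarrow> real"
  assumes gp: "gamma_process N m g" and m: "m > 0" and t: "0 < t" "t < T"
  shows "distributed N lborel (\<lambda>\<omega>. g t \<omega> / g T \<omega>) (\<lambda>u. ennreal (beta_density (m * t) (m * (T - t)) u))"
proof -
  interpret N: prob_space N using gp by (simp add: gamma_process_def)
  have g_measurable [measurable]: "g s \<in> borel_measurable N" if "s \<ge> 0" for s
    using gp that by (simp add: gamma_process_def)
  have g0: "AE \<omega> in N. g 0 \<omega> = 0" using gp by (simp add: gamma_process_def)
  have increment: "distributed N lborel (\<lambda>\<omega>. g v \<omega> - g u \<omega>) (\<lambda>x. ennreal (gamma_density (m * (v - u)) x))"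
    if "0 \<le> u" "u < v" for u v
    using gp that by (simp add: gamma_process_def)
  have independent_increments: "N.indep_vars (\<lambda>_. borel) (\<lambda>i \<omega>. g (ts ! Suc i) \<omega> - g (ts ! i) \<omega>) {..<length ts - 1}"
    if "sorted ts" "distinct ts" "\<forall>x\<in>set ts. 0 \<le> x" for ts
    using gp that by (simp add: gamma_process_def)
  define a where "a = m * t"
  define c where "c = m * (T - t)"
  have a: "a > 0" and c: "c > 0" using m t by (auto simp: a_def c_def)
  define G1 where "G1 = (\<lambda>\<omega>. g t \<omega> - g 0 \<omega>)"
  define G2 where "G2 = (\<lambda>\<omega>. g T \<omega> - g t \<omega>)"
  have G1: "distributed N lborel G1 (\<lambda>x. ennreal (gamma_density a x))"
    using increment[of 0 t] t unfolding G1_def a_def by simp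
  have G2: "distributed N lborel G2 (\<lambda>x. ennreal (gamma_density c x))"
    using increment[of t T] t unfolding G2_def c_def by simp
  have "N.indep_vars (\<lambda>_. borel) (\<lambda>i \<omega>. g ([0, t, T] ! Suc i) \<omega> - g ([0, t, T] ! i) \<omega>) {..<length [0, t, T] - 1}"
    using t by (intro independent_increments) auto
  from N.indep_vars_pair[OF this, of 0 1]
  have "N.indep_var lborel G1 lborel G2"
    by (simp add: G1_def G2_def N.indep_var_eq)
  then have joint: "distributed N (lborel \<Otimes>\<^sub>M lborel) (\<lambda>\<omega>. (G1 \<omega>, G2 \<omega>))
      (\<lambda>(x, y). ennreal (gamma_density a x) * ennreal (gamma_density c y))"
    by (intro N.distributed_joint_indep[OF _ _ G1 G2]) (auto intro: lborel.sigma_finite_measure_axioms)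
  have ratio_law: "(\<integral>\<^sup>+\<omega>. h (g t \<omega> / g T \<omega>) \<partial>N) = (\<integral>\<^sup>+z. ennreal (beta_density a c z) * h z \<partial>lborel)"
    if h [measurable]: "h \<in> borel_measurable borel" for h
  proof -
    have "(\<integral>\<^sup>+\<omega>. h (g t \<omega> / g T \<omega>) \<partial>N) = (\<integral>\<^sup>+\<omega>. h (G1 \<omega> / (G1 \<omega> + G2 \<omega>)) \<partial>N)"
      by (rule nn_integral_cong_AE) (use g0 in \<open>auto simp: G1_def G2_def\<close>)
    also have "\<dots> = (\<integral>\<^sup>+xy. (case xy of (x, y) \<Rightarrow> ennreal (gamma_density a x) * ennreal (gamma_density c y)) *
        (case xy of (x, y) \<Rightarrow> h (x / (x + y))) \<partial>(lborel \<Otimes>\<^sub>M lborel))"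
      by (subst distributed_nn_integral[OF joint]) auto
    also have "\<dots> = (\<integral>\<^sup>+x. \<integral>\<^sup>+y. ennreal (gamma_density a x * gamma_density c y) * h (x / (x + y)) \<partial>lborel \<partial>lborel)"
      by (subst lborel.nn_integral_fst[symmetric]) (auto simp: ennreal_mult gamma_density_nonneg a c)
    also have "\<dots> = (\<integral>\<^sup>+z. ennreal (beta_density a c z) * h z \<partial>lborel)"
      by (rule gamma_ratio_beta[OF a c h])
    finally show ?thesis .
  qed
  have "distr N lborel (\<lambda>\<omega>. g t \<omega> / g T \<omega>) = density lborel (\<lambda>u. ennreal (beta_density a c u))"
  proof (rule measure_eqI)
    fix A assume "A \<in> sets (distr N lborel (\<lambda>\<omega>. g t \<omega> / g T \<omega>))"
    then have [measurable]: "A \<in> sets borel" by simp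
    have "emeasure (distr N lborel (\<lambda>\<omega>. g t \<omega> / g T \<omega>)) A
        = (\<integral>\<^sup>+x. indicator A x \<partial>distr N lborel (\<lambda>\<omega>. g t \<omega> / g T \<omega>))"
      by simp
    also have "\<dots> = (\<integral>\<^sup>+\<omega>. indicator A (g t \<omega> / g T \<omega>) \<partial>N)"
      using t by (intro nn_integral_distr) auto
    also have "\<dots> = emeasure (density lborel (\<lambda>u. ennreal (beta_density a c u))) A"
      by (subst ratio_law) (auto simp: emeasure_density)
    finally show "emeasure (distr N lborel (\<lambda>\<omega>. g t \<omega> / g T \<omega>)) A
        = emeasure (density lborel (\<lambda>u. ennreal (beta_density a c u))) A" .
  qed simp
  then show ?thesis
    using t unfolding distributed_def a_def c_def by auto
qed

lemma gamma_bridge_distributed: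
  fixes M :: "'a measure" and b :: "real \<Rightarrow> 'a \<Rightarrow> real"
  assumes bridge: "gamma_bridge M m T b" and m: "m > 0" and t: "0 < t" "t < T"
  shows "distributed M lborel (b t) (\<lambda>u. ennreal (beta_density (m * t) (m * (T - t)) u))"
proof -
  from bridge obtain N :: "(real \<Rightarrow> real) measure" and g where gp: "gamma_process N m g"
    and path_law: "distr M (Pi\<^sub>M {0..T} (\<lambda>_. borel)) (path_on T b) =
        distr N (Pi\<^sub>M {0..T} (\<lambda>_. borel)) (path_on T (\<lambda>t \<omega>. g t \<omega> / g T \<omega>))"
    unfolding gamma_bridge_def by blast
  have b_measurable: "b s \<in> borel_measurable M" if "s \<in> {0..T}" for s
    using bridge that by (simp add: gamma_bridge_def)
  have g_measurable: "g s \<in> borel_measurable N" if "s \<ge> 0" for s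
    using gp that by (simp add: gamma_process_def)
  have tI: "t \<in> {0..T}" using t by auto
  have path_b: "path_on T b \<in> measurable M (Pi\<^sub>M {0..T} (\<lambda>_. borel))"
    unfolding path_on_def by (rule measurable_restrict) (use b_measurable in auto)
  have path_g: "path_on T (\<lambda>t \<omega>. g t \<omega> / g T \<omega>) \<in> measurable N (Pi\<^sub>M {0..T} (\<lambda>_. borel))"
    unfolding path_on_def by (rule measurable_restrict) (use g_measurable t in auto)
  have eval_t: "(\<lambda>f. f t) \<in> measurable (Pi\<^sub>M {0..T} (\<lambda>_. borel)) lborel"
    using measurable_component_singleton[OF tI, of "\<lambda>_. borel"] by simp
  have "distr M lborel (b t) = distr M lborel ((\<lambda>f. f t) \<circ> path_on T b)"
    using tI by (simp add: path_on_def o_def)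
  also have "\<dots> = distr (distr M (Pi\<^sub>M {0..T} (\<lambda>_. borel)) (path_on T b)) lborel (\<lambda>f. f t)"
    by (rule distr_distr[symmetric, OF eval_t path_b])
  also have "\<dots> = distr N lborel ((\<lambda>f. f t) \<circ> path_on T (\<lambda>t \<omega>. g t \<omega> / g T \<omega>))"
    unfolding path_law by (rule distr_distr[OF eval_t path_g])
  also have "\<dots> = distr N lborel (\<lambda>\<omega>. g t \<omega> / g T \<omega>)"
    using tI by (simp add: path_on_def o_def)
  also have "\<dots> = density lborel (\<lambda>u. ennreal (beta_density (m * t) (m * (T - t)) u))"
    using gamma_process_ratio_distributed[OF gp m t] by (simp add: distributed_def)
  finally show ?thesis
    using b_measurable[OF tI] by (simp add: distributed_def)
qed

lemma indep_rv_compose: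
  assumes M: "prob_space M" and indep: "indep_rv M S X T Y" and f: "f \<in> measurable T S"
  shows "prob_space.indep_var M S X S (\<lambda>\<omega>. f (Y \<omega>))"
proof -
  interpret prob_space M by (rule M)
  have Y: "Y \<in> measurable M T" using indep by (simp add: indep_rv_def)
  have "{(\<lambda>\<omega>. f (Y \<omega>)) -` A \<inter> space M | A. A \<in> sets S} \<subseteq> {Y -` B \<inter> space M | B. B \<in> sets T}"
  proof safe
    fix A assume "A \<in> sets S"
    then have "(\<lambda>\<omega>. f (Y \<omega>)) -` A \<inter> space M = Y -` (f -` A \<inter> space T) \<inter> space M
        \<and> f -` A \<inter> space T \<in> sets T"
      using measurable_space[OF Y] measurable_sets[OF f] by auto
    then show "\<exists>B. (\<lambda>\<omega>. f (Y \<omega>)) -` A \<inter> space M = Y -` B \<inter> space M \<and> B \<in> sets T" by blast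
  qed
  then have "sigma_sets (space M) {(\<lambda>\<omega>. f (Y \<omega>)) -` A \<inter> space M | A. A \<in> sets S}
      \<subseteq> sigma_sets (space M) {Y -` B \<inter> space M | B. B \<in> sets T}"
    by (rule sigma_sets_mono')
  then show ?thesis
    using indep measurable_comp[OF Y f] unfolding indep_rv_def indep_var_eq indep_sets2_eq
    by (auto simp: o_def)
qed

lemma bridge_joint_distributed:
  fixes M :: "'a measure" and X :: "'a \<Rightarrow> real" and b :: "real \<Rightarrow> 'a \<Rightarrow> real" and q :: "real \<Rightarrow> real"
  assumes M: "prob_space M"
    and X: "distributed M lborel X (\<lambda>x. ennreal (q x))"
    and bridge: "gamma_bridge M m T b"
    and indep: "indep_rv M borel X (Pi\<^sub>M {0..T} (\<lambda>_. borel)) (path_on T b)"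
    and m: "m > 0" and t: "0 < t" "t < T"
  shows "distributed M (lborel \<Otimes>\<^sub>M lborel) (\<lambda>\<omega>. (X \<omega>, b t \<omega>))
      (\<lambda>(x, u). ennreal (q x) * ennreal (beta_density (m * t) (m * (T - t)) u))"
proof -
  interpret prob_space M by (rule M)
  have tI: "t \<in> {0..T}" using t by auto
  have "indep_var borel X borel (\<lambda>\<omega>. path_on T b \<omega> t)"
    using measurable_component_singleton[OF tI, of "\<lambda>_. borel"]
    by (intro indep_rv_compose[OF M indep]) simp
  then have "indep_var lborel X lborel (b t)"
    using tI by (simp add: path_on_def indep_var_eq)
  then show ?thesis
    by (intro distributed_joint_indep[OF _ _ X gamma_bridge_distributed[OF bridge m t]])
       (auto intro: lborel.sigma_finite_measure_axioms)
qed

section \<open>The law of the product of a positive variable and a beta variable\<close>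

text \<open>If X has density q on the positive half-line and U is an independent beta(a, c) variable,
  then X U has density product_weight a c y * product_kernel a c q y at y; the second factor is the
  integral transform of q which appears in the numerator and denominator of S(t, y).\<close>
definition product_weight :: "real \<Rightarrow> real \<Rightarrow> real \<Rightarrow> real" where
  "product_weight a c y = indicator {0<..} y * y powr (a - 1) / Beta a c"

definition product_kernel :: "real \<Rightarrow> real \<Rightarrow> (real \<Rightarrow> real) \<Rightarrow> real \<Rightarrow> ennreal" where
  "product_kernel a c r y =
     (\<integral>\<^sup>+x. ennreal (indicator {y<..} x * (r x * x powr (1 - (a + c)) * (x - y) powr (c - 1))) \<partial>lborel)"

lemma product_weight_measurable [measurable]: "product_weight a c \<in> borel_measurable borel"
  unfolding product_weight_def by measurable

lemma product_weight_nonneg: "a > 0 \<Longrightarrow> c > 0 \<Longrightarrow> product_weight a c y \<ge> 0"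
  using Beta_pos[of a c] by (simp add: product_weight_def)

text \<open>Indicators of open half-lines with a varying endpoint, in a form the measurability
  prover understands.\<close>
lemma indicator_greaterThan: "indicator {y<..} x = (if y < x then 1 else 0 :: 'b :: zero_neq_one)"
  by (simp add: indicator_def)

lemma product_kernel_measurable [measurable]:
  assumes [measurable]: "r \<in> borel_measurable borel"
  shows "product_kernel a c r \<in> borel_measurable borel"
  unfolding product_kernel_def indicator_greaterThan by measurable

text \<open>The power identity behind the substitution y = x u.\<close>
lemma powr_beta_substitution:
  fixes x y a c :: real assumes "0 < y" "y < x"
  shows "(y / x) powr (a - 1) * (1 - y / x) powr (c - 1) / x
       = y powr (a - 1) * (x - y) powr (c - 1) * x powr (1 - (a + c))"
proof -
  have x: "x > 0" using assms by simp
  have "1 - y / x = (x - y) / x" using x by (simp add: field_simps)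
  then have "(y / x) powr (a - 1) * (1 - y / x) powr (c - 1) / x
      = y powr (a - 1) * (x - y) powr (c - 1) / (x powr (a - 1) * x powr (c - 1) * x powr 1)"
    using assms by (simp add: powr_divide)
  also have "x powr (a - 1) * x powr (c - 1) * x powr 1 = x powr ((a - 1) + (c - 1) + 1)"
    by (simp only: powr_add)
  also have "y powr (a - 1) * (x - y) powr (c - 1) / x powr ((a - 1) + (c - 1) + 1)
      = y powr (a - 1) * (x - y) powr (c - 1) * x powr (- ((a - 1) + (c - 1) + 1))"
    by (simp only: powr_minus divide_inverse)
  also have "- ((a - 1) + (c - 1) + 1) = 1 - (a + c)"
    by simp
  finally show ?thesis .
qed

lemma scaled_beta_integral:
  fixes G :: "real \<Rightarrow> ennreal"
  assumes a: "a > 0" and c: "c > 0" and x: "x > 0" and G [measurable]: "G \<in> borel_measurable borel"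
  shows "(\<integral>\<^sup>+u. ennreal (beta_density a c u) * G (x * u) \<partial>lborel)
       = (\<integral>\<^sup>+y. ennreal (product_weight a c y *
            (indicator {y<..} x * (x powr (1 - (a + c)) * (x - y) powr (c - 1)))) * G y \<partial>lborel)"
proof -
  have density: "beta_density a c (1 / x * y) / x = product_weight a c y *
      (indicator {y<..} x * (x powr (1 - (a + c)) * (x - y) powr (c - 1)))" for y
  proof (cases "0 < y \<and> y < x")
    case True
    then show ?thesis
      using powr_beta_substitution[of y x a c]
      by (simp add: beta_density_def product_weight_def indicator_def field_simps)
  next
    case False
    then have "\<not> (0 < 1 / x * y \<and> 1 / x * y < 1)"
      using x by (auto simp: field_simps zero_less_mult_iff)
    with False show ?thesis
      by (auto simp: beta_density_def product_weight_def indicator_def)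
  qed
  have "(\<integral>\<^sup>+u. ennreal (beta_density a c u) * G (x * u) \<partial>lborel)
      = ennreal (1 / x) * (\<integral>\<^sup>+y. ennreal (beta_density a c (1 / x * y)) * G (x * (1 / x * y)) \<partial>lborel)"
    by (rule nn_integral_lborel_scale) (use x in auto)
  also have "\<dots> = (\<integral>\<^sup>+y. ennreal (beta_density a c (1 / x * y) / x) * G y \<partial>lborel)"
  proof (subst nn_integral_cmult[symmetric], simp, intro nn_integral_cong)
    fix y
    show "ennreal (1 / x) * (ennreal (beta_density a c (1 / x * y)) * G (x * (1 / x * y)))
        = ennreal (beta_density a c (1 / x * y) / x) * G y"
      using x by (simp add: ennreal_mult'[symmetric] mult.assoc[symmetric])
  qed
  finally show ?thesis
    unfolding density .
qed

lemma product_mixture_integral: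
  fixes q :: "real \<Rightarrow> real" and G :: "real \<Rightarrow> ennreal"
  assumes a: "a > 0" and c: "c > 0" and q [measurable]: "q \<in> borel_measurable borel"
    and q_nonneg: "\<And>x. q x \<ge> 0" and q_vanish: "\<And>x. x \<le> 0 \<Longrightarrow> q x = 0"
    and G [measurable]: "G \<in> borel_measurable borel"
  shows "(\<integral>\<^sup>+x. \<integral>\<^sup>+u. ennreal (q x * beta_density a c u) * G (x * u) \<partial>lborel \<partial>lborel)
       = (\<integral>\<^sup>+y. ennreal (product_weight a c y) * product_kernel a c q y * G y \<partial>lborel)"
proof -
  define H where "H = (\<lambda>x y. ennreal (product_weight a c y) *
      ennreal (indicator {y<..} x * (q x * x powr (1 - (a + c)) * (x - y) powr (c - 1))) * G y)"
  have H_measurable [measurable]: "(\<lambda>(x, y). H x y) \<in> borel_measurable (lborel \<Otimes>\<^sub>M lborel)"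
    unfolding H_def indicator_greaterThan by measurable
  have inner: "(\<integral>\<^sup>+u. ennreal (q x * beta_density a c u) * G (x * u) \<partial>lborel) = (\<integral>\<^sup>+y. H x y \<partial>lborel)" for x
  proof (cases "x > 0")
    case False
    then have "H x y = 0" for y
      by (auto simp: H_def product_weight_def indicator_def)
    with False q_vanish[of x] show ?thesis by simp
  next
    case True
    have "(\<integral>\<^sup>+u. ennreal (q x * beta_density a c u) * G (x * u) \<partial>lborel)
        = ennreal (q x) * (\<integral>\<^sup>+u. ennreal (beta_density a c u) * G (x * u) \<partial>lborel)"
      using q_nonneg[of x]
      by (subst nn_integral_cmult[symmetric]) (auto simp: ennreal_mult mult.assoc beta_density_nonneg a c)
    also have "\<dots> = ennreal (q x) * (\<integral>\<^sup>+y. ennreal (product_weight a c y *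
            (indicator {y<..} x * (x powr (1 - (a + c)) * (x - y) powr (c - 1)))) * G y \<partial>lborel)"
      by (simp only: scaled_beta_integral[OF a c True G])
    also have "\<dots> = (\<integral>\<^sup>+y. H x y \<partial>lborel)"
      using q_nonneg[of x] product_weight_nonneg[OF a c]
      by (subst nn_integral_cmult[symmetric])
         (auto intro!: nn_integral_cong simp: H_def ennreal_mult[symmetric] indicator_def ac_simps)
    finally show ?thesis .
  qed
  have "(\<integral>\<^sup>+x. \<integral>\<^sup>+u. ennreal (q x * beta_density a c u) * G (x * u) \<partial>lborel \<partial>lborel)
      = (\<integral>\<^sup>+y. \<integral>\<^sup>+x. H x y \<partial>lborel \<partial>lborel)"
    unfolding inner using lborel_pair.Fubini'[OF H_measurable] by simp
  also have "\<dots> = (\<integral>\<^sup>+y. ennreal (product_weight a c y) * product_kernel a c q y * G y \<partial>lborel)"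
    unfolding H_def product_kernel_def by (simp add: nn_integral_cmult nn_integral_multc)
  finally show ?thesis .
qed

text \<open>A Lebesgue set integral of a function that is nonnegative on the set, as a real part of a
  nonnegative integral (no integrability is needed: both sides are 0 otherwise).\<close>
lemma set_integral_eq_enn2real:
  fixes f :: "real \<Rightarrow> real"
  assumes [measurable]: "f \<in> borel_measurable borel" "A \<in> sets borel"
    and nonneg: "\<And>x. x \<in> A \<Longrightarrow> 0 \<le> f x"
  shows "set_lebesgue_integral lborel A f = enn2real (\<integral>\<^sup>+x. ennreal (indicator A x * f x) \<partial>lborel)"
  unfolding set_lebesgue_integral_def
  by (subst integral_eq_nn_integral) (auto simp: indicator_def nonneg)

lemma beta_compl_tail:
  assumes a: "a > 0" and c: "c > 0" and v: "v \<ge> 0"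
  shows "(\<integral>\<^sup>+u. ennreal (beta_density a c u) * indicator {v<..} u \<partial>lborel) = ennreal (beta_compl a c v)"
proof -
  define f where "f = (\<lambda>z::real. z powr (a - 1) * (1 - z) powr (c - 1))"
  have f_measurable [measurable]: "f \<in> borel_measurable borel" unfolding f_def by measurable
  have B: "Beta a c > 0" using Beta_pos[OF a c] .
  have integrable_01: "set_integrable lborel {0..1} f"
    unfolding f_def by (rule integrable_Beta[OF a c])
  have integrable_v1: "set_integrable lborel {v..1} f"
    by (rule set_integrable_subset[OF integrable_01]) (use v in auto)
  have total: "set_lebesgue_integral lborel {0..1} f = Beta a c"
    using set_borel_integral_eq_integral(2)[OF integrable_01] has_integral_Beta_real[OF a c]
    by (simp add: f_def integral_unique)
  have tail: "(\<integral>\<^sup>+u. ennreal (indicator {v..1} u * f u) \<partial>lborel) = ennreal (set_lebesgue_integral lborel {v..1} f)"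
    using integrable_v1 unfolding set_lebesgue_integral_def set_integrable_def
    by (subst nn_integral_eq_integral) (auto simp: indicator_def f_def)
  have "AE u in lborel. ennreal (beta_density a c u) * indicator {v<..} u
      = ennreal (1 / Beta a c) * ennreal (indicator {v..1} u * f u)"
    using AE_lborel_singleton[of 0] AE_lborel_singleton[of 1] AE_lborel_singleton[of v]
  proof eventually_elim
    case (elim u)
    then show ?case
      using v B by (cases "v < u \<and> u < 1")
        (auto simp: beta_density_def f_def indicator_def ennreal_mult'[symmetric])
  qed
  then have "(\<integral>\<^sup>+u. ennreal (beta_density a c u) * indicator {v<..} u \<partial>lborel)
      = ennreal (1 / Beta a c) * ennreal (set_lebesgue_integral lborel {v..1} f)"
    by (simp add: nn_integral_cong_AE nn_integral_cmult tail)
  also have "\<dots> = ennreal (beta_compl a c v)"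
    using B total unfolding beta_compl_def by (simp add: f_def ennreal_mult'[symmetric])
  finally show ?thesis .
qed

lemma beta_compl_nonneg:
  assumes "a > 0" "c > 0" "v \<ge> 0"
  shows "beta_compl a c v \<ge> 0"
proof -
  have "set_lebesgue_integral lborel {v..1} (\<lambda>z. z powr (a - 1) * (1 - z) powr (c - 1)) \<ge> 0"
    "set_lebesgue_integral lborel {0..1} (\<lambda>z. z powr (a - 1) * (1 - z) powr (c - 1)) \<ge> 0"
    by (subst set_integral_eq_enn2real; simp)+
  then show ?thesis
    unfolding beta_compl_def by simp
qed

lemma beta_compl_measurable [measurable]: "beta_compl a c \<in> borel_measurable borel"
proof -
  have "beta_compl a c = (\<lambda>v. (\<integral>z. of_bool (v \<le> z \<and> z \<le> 1) * (z powr (a - 1) * (1 - z) powr (c - 1)) \<partial>lborel) /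
      set_lebesgue_integral lborel {0..1} (\<lambda>z. z powr (a - 1) * (1 - z) powr (c - 1)))"
    by (simp add: beta_compl_def set_lebesgue_integral_def indicator_def fun_eq_iff)
  then show ?thesis by simp
qed

lemma product_density_nn_integral:
  fixes X B :: "'a \<Rightarrow> real" and f g :: "real \<Rightarrow> real" and H :: "real \<Rightarrow> real \<Rightarrow> ennreal"
  assumes joint: "distributed M (lborel \<Otimes>\<^sub>M lborel) (\<lambda>\<omega>. (X \<omega>, B \<omega>)) (\<lambda>(x, u). ennreal (f x) * ennreal (g u))"
    and f_nonneg: "\<And>x. f x \<ge> 0" and g_nonneg: "\<And>u. g u \<ge> 0"
    and H [measurable]: "(\<lambda>(x, u). H x u) \<in> borel_measurable (lborel \<Otimes>\<^sub>M lborel)"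
  shows "(\<integral>\<^sup>+\<omega>. H (X \<omega>) (B \<omega>) \<partial>M) = (\<integral>\<^sup>+x. \<integral>\<^sup>+u. ennreal (f x * g u) * H x u \<partial>lborel \<partial>lborel)"
proof -
  have [measurable]: "(\<lambda>(x, u). ennreal (f x) * ennreal (g u)) \<in> borel_measurable (lborel \<Otimes>\<^sub>M lborel)"
    using distributed_borel_measurable[OF joint] by simp
  have "(\<integral>\<^sup>+\<omega>. H (X \<omega>) (B \<omega>) \<partial>M)
      = (\<integral>\<^sup>+xu. (case xu of (x, u) \<Rightarrow> ennreal (f x) * ennreal (g u)) * (case xu of (x, u) \<Rightarrow> H x u)
          \<partial>(lborel \<Otimes>\<^sub>M lborel))"
    by (subst distributed_nn_integral[OF joint]) auto
  also have "\<dots> = (\<integral>\<^sup>+x. \<integral>\<^sup>+u. ennreal (f x * g u) * H x u \<partial>lborel \<partial>lborel)"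
    by (subst lborel.nn_integral_fst[symmetric]) (auto simp: ennreal_mult f_nonneg g_nonneg)
  finally show ?thesis .
qed

text \<open>With w = 1 this is the law of X U; with w x = x it is the measure y \<mapsto> E[X; X U \<in> dy].\<close>
lemma product_expectation:
  fixes X U :: "'a \<Rightarrow> real" and q w :: "real \<Rightarrow> real" and G :: "real \<Rightarrow> ennreal"
  assumes joint: "distributed M (lborel \<Otimes>\<^sub>M lborel) (\<lambda>\<omega>. (X \<omega>, U \<omega>))
      (\<lambda>(x, u). ennreal (q x) * ennreal (beta_density a c u))"
    and a: "a > 0" and c: "c > 0"
    and q [measurable]: "q \<in> borel_measurable borel"
    and q_nonneg: "\<And>x. q x \<ge> 0" and q_vanish: "\<And>x. x \<le> 0 \<Longrightarrow> q x = 0"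
    and w [measurable]: "w \<in> borel_measurable borel" and w_nonneg: "\<And>x. x > 0 \<Longrightarrow> w x \<ge> 0"
    and G [measurable]: "G \<in> borel_measurable borel"
  shows "(\<integral>\<^sup>+\<omega>. ennreal (w (X \<omega>)) * G (X \<omega> * U \<omega>) \<partial>M)
       = (\<integral>\<^sup>+y. ennreal (product_weight a c y) * product_kernel a c (\<lambda>x. q x * w x) y * G y \<partial>lborel)"
proof -
  have qw_nonneg: "q x * w x \<ge> 0" for x
    using q_nonneg[of x] w_nonneg[of x] q_vanish[of x] by (cases "x > 0") auto
  have "(\<integral>\<^sup>+\<omega>. ennreal (w (X \<omega>)) * G (X \<omega> * U \<omega>) \<partial>M)
      = (\<integral>\<^sup>+x. \<integral>\<^sup>+u. ennreal (q x * beta_density a c u) * (ennreal (w x) * G (x * u)) \<partial>lborel \<partial>lborel)"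
    by (rule product_density_nn_integral[OF joint q_nonneg beta_density_nonneg[OF a c]]) simp
  also have "\<dots> = (\<integral>\<^sup>+x. \<integral>\<^sup>+u. ennreal (q x * w x * beta_density a c u) * G (x * u) \<partial>lborel \<partial>lborel)"
  proof (intro nn_integral_cong)
    fix x u :: real
    show "ennreal (q x * beta_density a c u) * (ennreal (w x) * G (x * u))
        = ennreal (q x * w x * beta_density a c u) * G (x * u)"
    proof (cases "x > 0")
      case True
      have "ennreal (q x * beta_density a c u) * (ennreal (w x) * G (x * u))
          = (ennreal (q x * beta_density a c u) * ennreal (w x)) * G (x * u)"
        by (rule mult.assoc[symmetric])
      also have "ennreal (q x * beta_density a c u) * ennreal (w x) = ennreal (q x * w x * beta_density a c u)"
        using True q_nonneg[of x] w_nonneg[of x] beta_density_nonneg[OF a c, of u]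
        by (simp add: ennreal_mult[symmetric] mult_ac)
      finally show ?thesis .
    qed (simp add: q_vanish)
  qed
  also have "\<dots> = (\<integral>\<^sup>+y. ennreal (product_weight a c y) * product_kernel a c (\<lambda>x. q x * w x) y * G y \<partial>lborel)"
    by (rule product_mixture_integral[OF a c _ qw_nonneg _ G]) (auto simp: q_vanish)
  finally show ?thesis .
qed

lemma product_tail_expectation:
  fixes X U :: "'a \<Rightarrow> real" and q w :: "real \<Rightarrow> real"
  assumes joint: "distributed M (lborel \<Otimes>\<^sub>M lborel) (\<lambda>\<omega>. (X \<omega>, U \<omega>))
      (\<lambda>(x, u). ennreal (q x) * ennreal (beta_density a c u))"
    and a: "a > 0" and c: "c > 0"
    and q_nonneg: "\<And>x. q x \<ge> 0" and q_vanish: "\<And>x. x \<le> 0 \<Longrightarrow> q x = 0"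
    and w [measurable]: "w \<in> borel_measurable borel" and w_nonneg: "\<And>x. x > 0 \<Longrightarrow> w x \<ge> 0"
    and ys: "ys \<ge> 0"
  shows "(\<integral>\<^sup>+\<omega>. ennreal (w (X \<omega>)) * indicator {ys<..} (X \<omega> * U \<omega>) \<partial>M)
       = (\<integral>\<^sup>+x. ennreal (indicator {ys<..} x * (q x * w x * beta_compl a c (ys / x))) \<partial>lborel)"
proof -
  have "(\<integral>\<^sup>+\<omega>. ennreal (w (X \<omega>)) * indicator {ys<..} (X \<omega> * U \<omega>) \<partial>M)
      = (\<integral>\<^sup>+x. \<integral>\<^sup>+u. ennreal (q x * beta_density a c u) * (ennreal (w x) * indicator {ys<..} (x * u)) \<partial>lborel \<partial>lborel)"
    by (rule product_density_nn_integral[OF joint q_nonneg beta_density_nonneg[OF a c]])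
       (simp add: indicator_greaterThan)
  also have "\<dots> = (\<integral>\<^sup>+x. ennreal (indicator {ys<..} x * (q x * w x * beta_compl a c (ys / x))) \<partial>lborel)"
  proof (intro nn_integral_cong)
    fix x :: real
    show "(\<integral>\<^sup>+u. ennreal (q x * beta_density a c u) * (ennreal (w x) * indicator {ys<..} (x * u)) \<partial>lborel)
        = ennreal (indicator {ys<..} x * (q x * w x * beta_compl a c (ys / x)))"
    proof (cases "x > ys")
      case True
      then have x: "x > 0" using ys by simp
      have "indicator {ys<..} (x * u) = (indicator {ys / x<..} u :: ennreal)" for u
        using x by (simp add: indicator_def field_simps)
      then have "(\<integral>\<^sup>+u. ennreal (q x * beta_density a c u) * (ennreal (w x) * indicator {ys<..} (x * u)) \<partial>lborel)
          = ennreal (q x * w x) * (\<integral>\<^sup>+u. ennreal (beta_density a c u) * indicator {ys / x<..} u \<partial>lborel)"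
        using q_nonneg[of x] w_nonneg[OF x] beta_density_nonneg[OF a c]
        by (subst nn_integral_cmult[symmetric]) (auto intro!: nn_integral_cong simp: ennreal_mult ac_simps)
      also have "\<dots> = ennreal (q x * w x * beta_compl a c (ys / x))"
        using x ys q_nonneg[of x] w_nonneg[OF x] beta_compl_nonneg[OF a c, of "ys / x"]
        by (simp add: beta_compl_tail[OF a c] ennreal_mult)
      finally show ?thesis
        using True by simp
    next
      case False
      have "ennreal (q x * beta_density a c u) * (ennreal (w x) * indicator {ys<..} (x * u)) = 0" for u
      proof (cases "x > 0 \<and> ys < x * u")
        case True
        with False have "x * 1 < x * u" by linarith
        then have "u > 1" using True by (simp only: mult_less_cancel_left_pos)
        then show ?thesis by (simp add: beta_density_def)
      qed (auto simp: q_vanish)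
      then show ?thesis
        using False by (simp del: mult_eq_0_iff)
    qed
  qed
  finally show ?thesis .
qed

section \<open>The call payoff identity\<close>

lemma product_kernel_eq_0:
  assumes r [measurable]: "r \<in> borel_measurable borel" and r' [measurable]: "r' \<in> borel_measurable borel"
    and r_nonneg: "\<And>x. y < x \<Longrightarrow> r x \<ge> 0" and r'_vanish: "\<And>x. y < x \<Longrightarrow> r x = 0 \<Longrightarrow> r' x = 0"
    and y: "y \<ge> 0" and zero: "product_kernel a c r y = 0"
  shows "product_kernel a c r' y = 0"
proof -
  have "AE x in lborel. ennreal (indicator {y<..} x * (r x * x powr (1 - (a + c)) * (x - y) powr (c - 1))) = 0"
    using zero unfolding product_kernel_def
    by (subst (asm) nn_integral_0_iff_AE) (auto simp: indicator_greaterThan)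
  then have "AE x in lborel. ennreal (indicator {y<..} x * (r' x * x powr (1 - (a + c)) * (x - y) powr (c - 1))) = 0"
  proof eventually_elim
    case (elim x)
    show ?case
    proof (cases "y < x")
      case True
      with elim have "r x * x powr (1 - (a + c)) * (x - y) powr (c - 1) \<le> 0"
        by (simp add: indicator_def ennreal_eq_0_iff)
      moreover have "x powr (1 - (a + c)) > 0" "(x - y) powr (c - 1) > 0"
        using True y by auto
      ultimately have "r x = 0"
        using r_nonneg[OF True] by (simp add: mult_le_0_iff zero_less_mult_iff)
      then show ?thesis by (simp add: r'_vanish[OF True])
    qed simp
  qed
  then show ?thesis
    unfolding product_kernel_def by (subst nn_integral_0_iff_AE) (auto simp: indicator_greaterThan)
qed

lemma call_payoff_split:
  fixes d n :: ennreal and w P K s :: real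
  assumes d: "d \<noteq> \<infinity>" and n: "n \<noteq> \<infinity>" and null: "d = 0 \<Longrightarrow> n = 0"
    and w: "0 \<le> w" and P: "0 \<le> P" and K: "0 \<le> K"
    and s: "s = P * enn2real n / enn2real d"
    and above: "0 < enn2real d \<Longrightarrow> y \<in> A \<Longrightarrow> K \<le> s"
    and below: "0 < enn2real d \<Longrightarrow> y \<notin> A \<Longrightarrow> s \<le> K"
  shows "ennreal w * d * ennreal (max 0 (s - K)) + ennreal K * (ennreal w * d * indicator A y)
       = ennreal P * (ennreal w * n * indicator A y)"
proof -
  define dr where "dr = enn2real d"
  define nr where "nr = enn2real n"
  have dr: "d = ennreal dr" "dr \<ge> 0" and nr: "n = ennreal nr" "nr \<ge> 0"
    using d n by (simp_all add: dr_def nr_def ennreal_enn2real_if)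
  show ?thesis
  proof (cases "dr > 0")
    case False
    then have "d = 0" "n = 0" using dr null by auto
    then show ?thesis by simp
  next
    case True
    show ?thesis
    proof (cases "y \<in> A")
      case True
      with \<open>dr > 0\<close> have "s \<ge> K" using above dr by simp
      moreover have "w * dr * (s - K) + K * (w * dr) = P * (w * nr)"
        using \<open>dr > 0\<close> dr nr by (simp add: s field_simps)
      ultimately show ?thesis
        using True w P K dr nr
        by (simp add: ennreal_mult[symmetric] ennreal_plus[symmetric] del: ennreal_plus)
    next
      case False
      with \<open>dr > 0\<close> have "s \<le> K" using below dr by simp
      then show ?thesis using False by simp
    qed
  qed
qed

lemma call_payoff_density_identity:
  fixes q S :: "real \<Rightarrow> real"
  assumes a: "a > 0" and c: "c > 0"
    and q [measurable]: "q \<in> borel_measurable borel" and q_nonneg: "\<And>x. q x \<ge> 0"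
    and d_finite: "AE y in lborel. ennreal (product_weight a c y) * product_kernel a c q y \<noteq> \<infinity>"
    and n_finite: "AE y in lborel. ennreal (product_weight a c y) * product_kernel a c (\<lambda>x. q x * x) y \<noteq> \<infinity>"
    and S_ratio: "\<And>y. y > 0 \<Longrightarrow>
      S y = P * enn2real (product_kernel a c (\<lambda>x. q x * x) y) / enn2real (product_kernel a c q y)"
    and above: "\<And>y. ys < y \<Longrightarrow> 0 < enn2real (product_kernel a c q y) \<Longrightarrow> K \<le> S y"
    and below: "\<And>y. 0 < y \<Longrightarrow> y < ys \<Longrightarrow> 0 < enn2real (product_kernel a c q y) \<Longrightarrow> S y \<le> K"
    and P: "P \<ge> 0" and K: "K \<ge> 0"
  shows "AE y in lborel.
      ennreal (product_weight a c y) * product_kernel a c q y * ennreal (max 0 (S y - K))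
        + ennreal K * (ennreal (product_weight a c y) * product_kernel a c q y * indicator {ys<..} y)
      = ennreal P * (ennreal (product_weight a c y) * product_kernel a c (\<lambda>x. q x * x) y * indicator {ys<..} y)"
  using d_finite n_finite AE_lborel_singleton[of ys]
proof eventually_elim
  case (elim y)
  let ?d = "product_kernel a c q y" and ?n = "product_kernel a c (\<lambda>x. q x * x) y"
  show ?case
  proof (cases "y > 0")
    case True
    have w: "product_weight a c y > 0" using True Beta_pos[OF a c] by (simp add: product_weight_def)
    with elim have finite: "?d \<noteq> \<infinity>" "?n \<noteq> \<infinity>"
      by (auto simp: ennreal_mult_eq_top_iff)
    have null: "?n = 0" if "?d = 0"
      by (rule product_kernel_eq_0[OF q _ _ _ less_imp_le[OF True] that]) (simp_all add: q_nonneg)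
    have "0 < enn2real ?d \<Longrightarrow> y \<in> {ys<..} \<Longrightarrow> K \<le> S y"
      "0 < enn2real ?d \<Longrightarrow> y \<notin> {ys<..} \<Longrightarrow> S y \<le> K"
      using above below True elim(3) by auto
    from call_payoff_split[OF finite null less_imp_le[OF w] P K S_ratio[OF True] this]
    show ?thesis .
  qed (simp add: product_weight_def)
qed

text \<open>The conditional expectation structure behind S: let X have density q on (0, \<infinity>),
  U be beta(a, c) independent of X, and let S(y) be P times the ratio of the kernels of x q(x)
  and of q, i.e. S(X U) = P E[X | X U].\<close>
lemma call_payoff_identity:
  fixes X U :: "'a \<Rightarrow> real" and q S :: "real \<Rightarrow> real"
  assumes M: "prob_space M"
    and joint: "distributed M (lborel \<Otimes>\<^sub>M lborel) (\<lambda>\<omega>. (X \<omega>, U \<omega>))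
      (\<lambda>(x, u). ennreal (q x) * ennreal (beta_density a c u))"
    and a: "a > 0" and c: "c > 0"
    and q [measurable]: "q \<in> borel_measurable borel"
    and q_nonneg: "\<And>x. q x \<ge> 0" and q_vanish: "\<And>x. x \<le> 0 \<Longrightarrow> q x = 0"
    and X_finite: "(\<integral>\<^sup>+\<omega>. ennreal (X \<omega>) \<partial>M) < \<infinity>"
    and S [measurable]: "S \<in> borel_measurable borel"
    and S_ratio: "\<And>y. y > 0 \<Longrightarrow>
      S y = P * enn2real (product_kernel a c (\<lambda>x. q x * x) y) / enn2real (product_kernel a c q y)"
    and above: "\<And>y. ys < y \<Longrightarrow> 0 < enn2real (product_kernel a c q y) \<Longrightarrow> K \<le> S y"
    and below: "\<And>y. 0 < y \<Longrightarrow> y < ys \<Longrightarrow> 0 < enn2real (product_kernel a c q y) \<Longrightarrow> S y \<le> K"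
    and P: "P \<ge> 0" and K: "K \<ge> 0"
  shows "(\<integral>\<^sup>+\<omega>. ennreal (max 0 (S (X \<omega> * U \<omega>) - K)) \<partial>M)
       + ennreal K * (\<integral>\<^sup>+\<omega>. indicator {ys<..} (X \<omega> * U \<omega>) \<partial>M)
       = ennreal P * (\<integral>\<^sup>+\<omega>. ennreal (X \<omega>) * indicator {ys<..} (X \<omega> * U \<omega>) \<partial>M)"
proof -
  interpret prob_space M by (rule M)
  let ?w = "product_weight a c" and ?d = "product_kernel a c q" and ?n = "product_kernel a c (\<lambda>x. q x * x)"
  have law: "(\<integral>\<^sup>+\<omega>. G (X \<omega> * U \<omega>) \<partial>M) = (\<integral>\<^sup>+y. ennreal (?w y) * ?d y * G y \<partial>lborel)"
    if [measurable]: "G \<in> borel_measurable borel" for G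
    using product_expectation[OF joint a c q q_nonneg q_vanish, of "\<lambda>_. 1" G] by simp
  have first_moment: "(\<integral>\<^sup>+\<omega>. ennreal (X \<omega>) * G (X \<omega> * U \<omega>) \<partial>M) = (\<integral>\<^sup>+y. ennreal (?w y) * ?n y * G y \<partial>lborel)"
    if [measurable]: "G \<in> borel_measurable borel" for G
    using product_expectation[OF joint a c q q_nonneg q_vanish, of "\<lambda>x. x" G] by simp
  have "AE y in lborel. ennreal (?w y) * ?d y \<noteq> \<infinity>"
    using law[of "\<lambda>_. 1"] emeasure_space_1 by (intro nn_integral_noteq_infinite) auto
  moreover have "AE y in lborel. ennreal (?w y) * ?n y \<noteq> \<infinity>"
    using first_moment[of "\<lambda>_. 1"] X_finite by (intro nn_integral_noteq_infinite) auto
  ultimately have pointwise: "AE y in lborel.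
      ennreal (?w y) * ?d y * ennreal (max 0 (S y - K)) + ennreal K * (ennreal (?w y) * ?d y * indicator {ys<..} y)
      = ennreal P * (ennreal (?w y) * ?n y * indicator {ys<..} y)"
    by (rule call_payoff_density_identity[OF a c q q_nonneg _ _ _ _ _ P K])
      (fact S_ratio, fact above, fact below)
  have payoff: "(\<integral>\<^sup>+\<omega>. ennreal (max 0 (S (X \<omega> * U \<omega>) - K)) \<partial>M)
      = (\<integral>\<^sup>+y. ennreal (?w y) * ?d y * ennreal (max 0 (S y - K)) \<partial>lborel)"
    by (rule law) simp
  have probability: "(\<integral>\<^sup>+\<omega>. indicator {ys<..} (X \<omega> * U \<omega>) \<partial>M)
      = (\<integral>\<^sup>+y. ennreal (?w y) * ?d y * indicator {ys<..} y \<partial>lborel)"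
    by (rule law) simp
  have "(\<integral>\<^sup>+\<omega>. ennreal (max 0 (S (X \<omega> * U \<omega>) - K)) \<partial>M)
       + ennreal K * (\<integral>\<^sup>+\<omega>. indicator {ys<..} (X \<omega> * U \<omega>) \<partial>M)
      = (\<integral>\<^sup>+y. ennreal (?w y) * ?d y * ennreal (max 0 (S y - K))
          + ennreal K * (ennreal (?w y) * ?d y * indicator {ys<..} y) \<partial>lborel)"
    unfolding payoff probability by (simp add: nn_integral_add nn_integral_cmult)
  also have "\<dots> = (\<integral>\<^sup>+y. ennreal P * (ennreal (?w y) * ?n y * indicator {ys<..} y) \<partial>lborel)"
    by (rule nn_integral_cong_AE[OF pointwise])
  also have "\<dots> = ennreal P * (\<integral>\<^sup>+\<omega>. ennreal (X \<omega>) * indicator {ys<..} (X \<omega> * U \<omega>) \<partial>M)"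
    by (subst first_moment) (simp_all add: nn_integral_cmult)
  finally show ?thesis .
qed

lemma enn2real_balance:
  fixes L :: ennreal and f g :: "real \<Rightarrow> real"
  assumes balance: "L + ennreal K * (\<integral>\<^sup>+x. ennreal (f x) \<partial>N) = ennreal P * (\<integral>\<^sup>+x. ennreal (g x) \<partial>N)"
    and f_finite: "(\<integral>\<^sup>+x. ennreal (f x) \<partial>N) < \<infinity>" and g_finite: "(\<integral>\<^sup>+x. ennreal (g x) \<partial>N) < \<infinity>"
    and [measurable]: "f \<in> borel_measurable N" "g \<in> borel_measurable N"
    and f_nonneg: "\<And>x. f x \<ge> 0" and g_nonneg: "\<And>x. g x \<ge> 0" and K: "K \<ge> 0" and P: "P \<ge> 0"
  shows "enn2real L = (\<integral>x. P * g x - K * f x \<partial>N)"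
proof -
  have f: "integrable N f" and g: "integrable N g"
    using f_finite g_finite f_nonneg g_nonneg by (auto intro!: integrableI_nonneg)
  have "L + ennreal (K * integral\<^sup>L N f) = ennreal (P * integral\<^sup>L N g)"
    using balance K P f g f_nonneg g_nonneg
    by (simp add: nn_integral_eq_integral ennreal_mult integral_nonneg_AE)
  moreover have "L \<noteq> \<top>"
    using calculation by (cases "L = \<top>") auto
  ultimately have "ennreal (enn2real L + K * integral\<^sup>L N f) = ennreal (P * integral\<^sup>L N g)"
    using K f_nonneg by (simp add: ennreal_plus ennreal_enn2real_if integral_nonneg)
  then have "enn2real L + K * integral\<^sup>L N f = P * integral\<^sup>L N g"
    using K P f_nonneg g_nonneg by (subst (asm) ennreal_inj) (auto intro!: integral_nonneg)
  then show ?thesis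
    using f g by simp
qed

lemma call_price_product:
  fixes X U :: "'a \<Rightarrow> real" and q S :: "real \<Rightarrow> real"
  assumes M: "prob_space M"
    and X [measurable]: "X \<in> borel_measurable M" and U [measurable]: "U \<in> borel_measurable M"
    and joint: "distributed M (lborel \<Otimes>\<^sub>M lborel) (\<lambda>\<omega>. (X \<omega>, U \<omega>))
      (\<lambda>(x, u). ennreal (q x) * ennreal (beta_density a c u))"
    and a: "a > 0" and c: "c > 0"
    and q [measurable]: "q \<in> borel_measurable borel"
    and q_nonneg: "\<And>x. q x \<ge> 0" and q_vanish: "\<And>x. x \<le> 0 \<Longrightarrow> q x = 0"
    and X_integrable: "integrable M X"
    and S [measurable]: "S \<in> borel_measurable borel"
    and S_ratio: "\<And>y. y > 0 \<Longrightarrow>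
      S y = P * enn2real (product_kernel a c (\<lambda>x. q x * x) y) / enn2real (product_kernel a c q y)"
    and above: "\<And>y. ys < y \<Longrightarrow> 0 < enn2real (product_kernel a c q y) \<Longrightarrow> K \<le> S y"
    and below: "\<And>y. 0 < y \<Longrightarrow> y < ys \<Longrightarrow> 0 < enn2real (product_kernel a c q y) \<Longrightarrow> S y \<le> K"
    and P: "P \<ge> 0" and K: "K \<ge> 0" and ys: "ys \<ge> 0"
  shows "(\<integral>\<omega>. max 0 (S (X \<omega> * U \<omega>) - K) \<partial>M)
       = set_lebesgue_integral lborel {ys<..} (\<lambda>x. q x * (x * P - K) * beta_compl a c (ys / x))"
proof -
  interpret prob_space M by (rule M)
  have "(\<integral>\<^sup>+\<omega>. ennreal (X \<omega>) \<partial>M) \<le> (\<integral>\<^sup>+\<omega>. ennreal (norm (X \<omega>)) \<partial>M)"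
    by (intro nn_integral_mono) (simp add: ennreal_leI)
  also have "\<dots> < \<infinity>"
    using X_integrable by (simp add: integrable_iff_bounded)
  finally have X_finite: "(\<integral>\<^sup>+\<omega>. ennreal (X \<omega>) \<partial>M) < \<infinity>" .
  have bc_nonneg: "beta_compl a c (ys / x) \<ge> 0" if "ys < x" for x
    using that ys by (intro beta_compl_nonneg[OF a c]) auto
  have f_nonneg: "indicator {ys<..} x * (q x * beta_compl a c (ys / x)) \<ge> 0" for x
    using bc_nonneg[of x] q_nonneg[of x] by (simp add: indicator_def)
  have g_nonneg: "indicator {ys<..} x * (q x * x * beta_compl a c (ys / x)) \<ge> 0" for x
    using bc_nonneg[of x] q_nonneg[of x] ys by (simp add: indicator_def)
  have tail_probability: "(\<integral>\<^sup>+\<omega>. indicator {ys<..} (X \<omega> * U \<omega>) \<partial>M)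
      = (\<integral>\<^sup>+x. ennreal (indicator {ys<..} x * (q x * beta_compl a c (ys / x))) \<partial>lborel)"
    using product_tail_expectation[OF joint a c q_nonneg q_vanish, of "\<lambda>_. 1" ys] ys by simp
  have tail_moment: "(\<integral>\<^sup>+\<omega>. ennreal (X \<omega>) * indicator {ys<..} (X \<omega> * U \<omega>) \<partial>M)
      = (\<integral>\<^sup>+x. ennreal (indicator {ys<..} x * (q x * x * beta_compl a c (ys / x))) \<partial>lborel)"
    using product_tail_expectation[OF joint a c q_nonneg q_vanish, of "\<lambda>x. x" ys] ys by simp
  have "(\<integral>\<^sup>+\<omega>. indicator {ys<..} (X \<omega> * U \<omega>) \<partial>M) \<le> (\<integral>\<^sup>+\<omega>. 1 \<partial>M)"
    by (intro nn_integral_mono) (simp add: indicator_def)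
  then have "(\<integral>\<^sup>+\<omega>. indicator {ys<..} (X \<omega> * U \<omega>) \<partial>M) < \<infinity>"
    using emeasure_space_1 by (simp add: order_le_less_trans)
  moreover have "(\<integral>\<^sup>+\<omega>. ennreal (X \<omega>) * indicator {ys<..} (X \<omega> * U \<omega>) \<partial>M) < \<infinity>"
    by (rule le_less_trans[OF _ X_finite]) (auto intro!: nn_integral_mono simp: indicator_def)
  moreover have "(\<integral>\<^sup>+\<omega>. ennreal (max 0 (S (X \<omega> * U \<omega>) - K)) \<partial>M)
      + ennreal K * (\<integral>\<^sup>+\<omega>. indicator {ys<..} (X \<omega> * U \<omega>) \<partial>M)
      = ennreal P * (\<integral>\<^sup>+\<omega>. ennreal (X \<omega>) * indicator {ys<..} (X \<omega> * U \<omega>) \<partial>M)"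
    by (rule call_payoff_identity[OF M joint a c q q_nonneg _ X_finite S _ _ _ P K])
      (fact q_vanish, fact S_ratio, fact above, fact below)
  ultimately have "enn2real (\<integral>\<^sup>+\<omega>. ennreal (max 0 (S (X \<omega> * U \<omega>) - K)) \<partial>M)
      = (\<integral>x. P * (indicator {ys<..} x * (q x * x * beta_compl a c (ys / x)))
              - K * (indicator {ys<..} x * (q x * beta_compl a c (ys / x))) \<partial>lborel)"
    unfolding tail_probability tail_moment
    by (intro enn2real_balance[where K = K and P = P] f_nonneg g_nonneg K P) auto
  moreover have "(\<integral>\<omega>. max 0 (S (X \<omega> * U \<omega>) - K) \<partial>M)
      = enn2real (\<integral>\<^sup>+\<omega>. ennreal (max 0 (S (X \<omega> * U \<omega>) - K)) \<partial>M)"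
    by (rule integral_eq_nn_integral) auto
  moreover have "(\<integral>x. P * (indicator {ys<..} x * (q x * x * beta_compl a c (ys / x)))
              - K * (indicator {ys<..} x * (q x * beta_compl a c (ys / x))) \<partial>lborel)
      = set_lebesgue_integral lborel {ys<..} (\<lambda>x. q x * (x * P - K) * beta_compl a c (ys / x))"
    unfolding set_lebesgue_integral_def
    by (intro Bochner_Integration.integral_cong) (auto simp: indicator_def algebra_simps)
  ultimately show ?thesis
    by simp
qed

lemma S_fun_measurable [measurable]:
  assumes [measurable]: "p \<in> borel_measurable borel"
  shows "S_fun m T PtT p t \<in> borel_measurable borel"
  unfolding S_fun_def S_num_def S_den_def set_lebesgue_integral_def indicator_greaterThan by measurable

lemma S_integrals_as_kernels:
  assumes [measurable]: "p \<in> borel_measurable borel" and p_nonneg: "\<And>x. p x \<ge> 0"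
    and q_eq: "\<And>x. x > 0 \<Longrightarrow> q x = p x" and y: "y \<ge> 0"
  shows "S_den m T p t y = enn2real (product_kernel (m * t) (m * (T - t)) q y)"
    and "S_num m T p t y = enn2real (product_kernel (m * t) (m * (T - t)) (\<lambda>x. q x * x) y)"
proof -
  have exponent: "1 - (m * t + m * (T - t)) = 1 - m * T"
    by (simp add: algebra_simps)
  have "x * x powr (1 - m * T) = x powr (2 - m * T)" if "x > 0" for x
    using that powr_add[of x 1 "1 - m * T"] by simp
  then show "S_den m T p t y = enn2real (product_kernel (m * t) (m * (T - t)) q y)"
    and "S_num m T p t y = enn2real (product_kernel (m * t) (m * (T - t)) (\<lambda>x. q x * x) y)"
    unfolding S_den_def S_num_def product_kernel_def exponent using y
    by (subst set_integral_eq_enn2real; (auto intro!: arg_cong[where f = enn2real] nn_integral_cong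
          simp: p_nonneg q_eq indicator_def mult_ac))+
qed

lemma S_fun_as_kernel_ratio:
  assumes "p \<in> borel_measurable borel" and "\<And>x. p x \<ge> 0"
    and "\<And>x. x > 0 \<Longrightarrow> q x = p x" and "y > 0"
  shows "S_fun m T PtT p t y = PtT * enn2real (product_kernel (m * t) (m * (T - t)) (\<lambda>x. q x * x) y)
      / enn2real (product_kernel (m * t) (m * (T - t)) q y)"
  using S_integrals_as_kernels[OF assms(1-3)] assms(4) by (simp add: S_fun_def)

lemma distributed_positive_density:
  fixes X :: "'a \<Rightarrow> real" and p :: "real \<Rightarrow> real"
  assumes X: "distributed M lborel X (\<lambda>x. ennreal (p x))" and X_pos: "AE \<omega> in M. X \<omega> > 0"
    and [measurable]: "p \<in> borel_measurable borel"
  shows "distributed M lborel X (\<lambda>x. ennreal (p x * indicator {0<..} x))"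
proof -
  have [measurable]: "X \<in> borel_measurable M"
    using distributed_measurable[OF X] by simp
  have "{\<omega> \<in> space M. \<not> X \<omega> > 0} = X -` {..0} \<inter> space M" by auto
  moreover have "X -` {..0} \<inter> space M \<in> sets M" by measurable
  ultimately have "emeasure M (X -` {..0} \<inter> space M) = 0"
    using X_pos AE_iff_measurable[of "X -` {..0} \<inter> space M" M "\<lambda>\<omega>. X \<omega> > 0"] by simp
  then have "(\<integral>\<^sup>+x. ennreal (p x) * indicator {..0} x \<partial>lborel) = 0"
    using distributed_emeasure[OF X, of "{..0}"] by simp
  then have "AE x in lborel. ennreal (p x) * indicator {..0} x = 0"
    by (subst (asm) nn_integral_0_iff_AE) auto
  then have "AE x in lborel. ennreal (p x * indicator {0<..} x) = ennreal (p x)"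
    by eventually_elim (auto simp: indicator_def split: if_splits)
  then have "distributed M lborel X (\<lambda>x. ennreal (p x * indicator {0<..} x))
      \<longleftrightarrow> distributed M lborel X (\<lambda>x. ennreal (p x))"
    by (rule distributed_cong_density) auto
  with X show ?thesis by simp
qed

theorem mainTheorem14:
  fixes M :: "'a measure" and X :: "'a \<Rightarrow> real" and p :: "real \<Rightarrow> real"
    and b :: "real \<Rightarrow> 'a \<Rightarrow> real"
    and m T t K P0t PtT ystar :: real
  assumes M: "prob_space M"
    and Xmeas: "X \<in> borel_measurable M"
    and p_meas: "p \<in> borel_measurable borel"
    and p_nonneg: "\<And>x. 0 \<le> p x"
    and X_dens: "distributed M lborel X (\<lambda>x. ennreal (p x))"
    and X_pos: "AE \<omega> in M. X \<omega> > 0"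
    and X_int: "integrable M X"
    and m_pos: "m > 0"
    and bridge: "gamma_bridge M m T b"
    and indep: "indep_rv M borel X (Pi\<^sub>M {0..T} (\<lambda>_. borel)) (path_on T b)"
    and P0t: "P0t > 0" and PtT: "PtT > 0"
    and t: "0 < t" "t < T"
    and K: "K > 0"
    and ystar: "ystar \<ge> 0"
    and above: "\<And>y. y > ystar \<Longrightarrow> S_den m T p t y > 0 \<Longrightarrow> S_fun m T PtT p t y \<ge> K"
    and below: "\<And>y. 0 < y \<Longrightarrow> y < ystar \<Longrightarrow> S_den m T p t y > 0 \<Longrightarrow> S_fun m T PtT p t y \<le> K"
  shows "P0t * (\<integral>\<omega>. max 0 (S_fun m T PtT p t (X \<omega> * b t \<omega>) - K) \<partial>M)
       = P0t * set_lebesgue_integral lborel {ystar<..}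
           (\<lambda>x. p x * (x * PtT - K) * beta_compl (m * t) (m * (T - t)) (ystar / x))"
proof -
  note [measurable] = p_meas Xmeas
  define q where "q x = p x * indicator {0<..} x" for x
  have q_eq: "q x = p x" if "x > 0" for x using that by (simp add: q_def)
  have q_measurable: "q \<in> borel_measurable borel" unfolding q_def by measurable
  have q_nonneg: "q x \<ge> 0" and q_vanish: "x \<le> 0 \<Longrightarrow> q x = 0" for x
    using p_nonneg[of x] by (simp_all add: q_def)
  have joint: "distributed M (lborel \<Otimes>\<^sub>M lborel) (\<lambda>\<omega>. (X \<omega>, b t \<omega>))
      (\<lambda>(x, u). ennreal (q x) * ennreal (beta_density (m * t) (m * (T - t)) u))"
    using distributed_positive_density[OF X_dens X_pos p_meas] unfolding q_def[abs_def]
    by (rule bridge_joint_distributed[OF M _ bridge indep m_pos t])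
  note S_den = S_integrals_as_kernels(1)[OF p_meas p_nonneg q_eq]
  have "(\<integral>\<omega>. max 0 (S_fun m T PtT p t (X \<omega> * b t \<omega>) - K) \<partial>M)
      = set_lebesgue_integral lborel {ystar<..} (\<lambda>x. q x * (x * PtT - K) * beta_compl (m * t) (m * (T - t)) (ystar / x))"
  proof (rule call_price_product[OF M Xmeas _ joint])
    show "b t \<in> borel_measurable M" using bridge t by (simp add: gamma_bridge_def)
    show "K \<le> S_fun m T PtT p t y"
      if "ystar < y" "0 < enn2real (product_kernel (m * t) (m * (T - t)) q y)" for y
      using that ystar above[of y] S_den[of y] by simp
    show "S_fun m T PtT p t y \<le> K"
      if "0 < y" "y < ystar" "0 < enn2real (product_kernel (m * t) (m * (T - t)) q y)" for y
      using that below[of y] S_den[of y] by simp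
  qed (use m_pos t PtT K ystar X_int S_fun_as_kernel_ratio[OF p_meas p_nonneg q_eq]
      q_measurable q_nonneg q_vanish in auto)
  also have "\<dots> = set_lebesgue_integral lborel {ystar<..}
      (\<lambda>x. p x * (x * PtT - K) * beta_compl (m * t) (m * (T - t)) (ystar / x))"
    unfolding set_lebesgue_integral_def using ystar
    by (intro Bochner_Integration.integral_cong) (auto simp: q_eq indicator_def)
  finally show ?thesis by simp
qed

end
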